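(* For every integer $n\geq 2$, let $o_n=|\{i: K_i=1,\ 1\le i\le n\}|$ and $t_n=|\{i: K_i=2,\ 1\le i\le n\}|$. Then \[\frac14\le \frac{o_n}{t_n}\le 4 .\]
   Context: $K=(K_n)_{n\ge1}$ denotes the classical Kolakoski sequence: the unique infinite sequence over the alphabet $\{1,2\}$ with $K_1=1$ whose sequence of run lengths equals $K$ itself (a run is a maximal block of consecutive equal symbols). Its first terms are $1,2,2,1,1,2,1,2,2,1,2,2,1,1,\dots$ *)

theory Defs
  imports Complex_Main
begin

text \<open>Sequences are 1-indexed: only the values at indices n \<ge> 1 matter.
  Over the alphabet {1,2}, consecutive maximal runs alternate in symbol, so a
  sequence starting with 1 whose run-length sequence is K is exactly the
  concatenation over j = 1,2,3,... of K j copies of the symbol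
  (if odd j then 1 else 2).\<close>

definition run_start :: "(nat \<Rightarrow> nat) \<Rightarrow> nat \<Rightarrow> nat" where
  "run_start K j = (\<Sum>m\<in>{1..<j}. K m)"

definition is_kolakoski :: "(nat \<Rightarrow> nat) \<Rightarrow> bool" where
  "is_kolakoski K \<longleftrightarrow>
     (\<forall>n\<ge>1. K n \<in> {1, 2}) \<and> K 1 = 1 \<and>
     (\<forall>j\<ge>1. \<forall>i. run_start K j < i \<and> i \<le> run_start K j + K j \<longrightarrow>
                    K i = (if odd j then 1 else 2))"

definition ones_count :: "(nat \<Rightarrow> nat) \<Rightarrow> nat \<Rightarrow> nat" where
  "ones_count K n = card {i \<in> {1..n}. K i = 1}"

definition twos_count :: "(nat \<Rightarrow> nat) \<Rightarrow> nat \<Rightarrow> nat" where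
  "twos_count K n = card {i \<in> {1..n}. K i = 2}"

end

theory Submission
  imports Defs
begin

text \<open>Let x be the sequence obtained by writing, for j = 1, 2, 3, ...,
  a run of L j copies of the symbol 1 (j odd) or 2 (j even), where every run
  length L j lies in {1,2}; the Kolakoski sequence is the case x = L.  If the
  position n lies in the j-th run, then among x 1, ..., x n each symbol c
  occurs in every one of the runs 1..j carrying c, and each such run
  contributes between 1 and 2 occurrences (the last one possibly partially,
  but still at least one).  So the number of c's is between N and 2N, where
  N is the number of runs among 1..j carrying c: N = (j+1) div 2 for c = 1
  and N = j div 2 for c = 2.  For n \<ge> 2 the position n is not in the first
  run (which is {1}), so j \<ge> 2, and both counts lie in [k, 2k+2] with
  k = j div 2 \<ge> 1; hence their ratio is at most 4.
  The file first develops occurrence counting, then the counts at and inside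
  runs of a run expansion, and finally specialises to the Kolakoski sequence.\<close>

definition occ :: "(nat \<Rightarrow> nat) \<Rightarrow> nat \<Rightarrow> nat \<Rightarrow> nat" where
  "occ x c n = card {i \<in> {1..n}. x i = c}"

lemma ones_count_occ: "ones_count K n = occ K 1 n"
  unfolding ones_count_def occ_def ..

lemma twos_count_occ: "twos_count K n = occ K 2 n"
  unfolding twos_count_def occ_def ..

lemma occ_0 [simp]: "occ x c 0 = 0"
  unfolding occ_def by simp

lemma occ_Suc: "occ x c (Suc n) = occ x c n + (if x (Suc n) = c then 1 else 0)"
proof -
  have "{i \<in> {1..Suc n}. x i = c} =
        (if x (Suc n) = c then insert (Suc n) {i \<in> {1..n}. x i = c}
         else {i \<in> {1..n}. x i = c})"
    by (auto simp: le_Suc_eq)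
  then show ?thesis
    unfolding occ_def by simp
qed

lemma occ_constant_block:
  assumes "\<And>i. a < i \<Longrightarrow> i \<le> a + d \<Longrightarrow> x i = v"
  shows "occ x c (a + d) = occ x c a + (if v = c then d else 0)"
  using assms
proof (induction d)
  case 0
  then show ?case by simp
next
  case (Suc d)
  have "x (Suc (a + d)) = v" using Suc.prems by simp
  moreover have "occ x c (a + d) = occ x c a + (if v = c then d else 0)"
    using Suc by simp
  ultimately show ?case by (simp add: occ_Suc)
qed

definition run_symbol :: "nat \<Rightarrow> nat" where
  "run_symbol j = (if odd j then 1 else 2)"

lemma occ_run_symbol:
  "occ run_symbol 1 j = (j + 1) div 2 \<and> occ run_symbol 2 j = j div 2"
  by (induction j) (auto simp: occ_Suc run_symbol_def)

definition run_expansion :: "(nat \<Rightarrow> nat) \<Rightarrow> (nat \<Rightarrow> nat) \<Rightarrow> bool" where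
  "run_expansion x L \<longleftrightarrow>
     (\<forall>m\<ge>1. L m \<in> {1, 2}) \<and>
     (\<forall>j\<ge>1. \<forall>i. run_start L j < i \<and> i \<le> run_start L j + L j \<longrightarrow> x i = run_symbol j)"

lemma kolakoski_run_expansion:
  assumes "is_kolakoski K"
  shows "run_expansion K K"
  using assms unfolding is_kolakoski_def run_expansion_def run_symbol_def by blast

lemma run_start_1 [simp]: "run_start L (Suc 0) = 0"
  unfolding run_start_def by simp

lemma run_start_Suc: "j \<ge> 1 \<Longrightarrow> run_start L (Suc j) = run_start L j + L j"
  unfolding run_start_def by (simp add: sum.atLeastLessThan_Suc)

lemma run_containing:
  assumes pos: "\<And>m. m \<ge> 1 \<Longrightarrow> L m \<ge> 1" and "n \<ge> 1"
  shows "\<exists>j\<ge>1. run_start L j < n \<and> n \<le> run_start L j + L j"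
  using \<open>n \<ge> 1\<close>
proof (induction n rule: dec_induct)
  case base
  show ?case using pos[of 1] by (intro exI[of _ 1]) simp
next
  case (step n)
  then obtain j where j: "j \<ge> 1" "run_start L j < n" "n \<le> run_start L j + L j"
    by blast
  show ?case
  proof (cases "Suc n \<le> run_start L j + L j")
    case True
    then show ?thesis using j by auto
  next
    case False
    then have "run_start L (Suc j) = n"
      using j by (simp add: run_start_Suc)
    then show ?thesis
      using pos[of "Suc j"] by (intro exI[of _ "Suc j"]) simp
  qed
qed

context
  fixes x L :: "nat \<Rightarrow> nat"
  assumes expansion: "run_expansion x L"
begin

lemma run_length: "j \<ge> 1 \<Longrightarrow> L j \<in> {1, 2}"
  using expansion unfolding run_expansion_def by blast

lemma occ_run_prefix:
  assumes "j \<ge> 1" and "d \<le> L j"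
  shows "occ x c (run_start L j + d) =
         occ x c (run_start L j) + (if run_symbol j = c then d else 0)"
  by (rule occ_constant_block) (use expansion assms in \<open>auto simp: run_expansion_def\<close>)

lemma occ_at_run_start:
  assumes "j \<ge> 1"
  shows "occ run_symbol c (j - 1) \<le> occ x c (run_start L j)
         \<and> occ x c (run_start L j) \<le> 2 * occ run_symbol c (j - 1)"
  using assms
proof (induction j rule: dec_induct)
  case base
  then show ?case by simp
next
  case (step j)
  have "occ x c (run_start L (Suc j)) =
        occ x c (run_start L j) + (if run_symbol j = c then L j else 0)"
    using occ_run_prefix[OF step.hyps(1) order.refl] step.hyps(1)
    by (simp add: run_start_Suc)
  moreover have "occ run_symbol c j =
                 occ run_symbol c (j - 1) + (if run_symbol j = c then 1 else 0)"
    using occ_Suc[of run_symbol c "j - 1"] step.hyps(1) by simp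
  ultimately show ?case
    using step.IH run_length[OF step.hyps(1)] by auto
qed

text \<open>Inside run j the symbol c occurs between N and 2N times, N being the
  number of runs among the first j that carry c: the current run contributes
  between 1 and L j \<le> 2 symbols.\<close>
lemma occ_in_run:
  assumes "j \<ge> 1" and "run_start L j < n" and "n \<le> run_start L j + L j"
  shows "occ run_symbol c j \<le> occ x c n \<and> occ x c n \<le> 2 * occ run_symbol c j"
proof -
  define d where "d = n - run_start L j"
  have d: "1 \<le> d" "d \<le> 2" "d \<le> L j" "n = run_start L j + d"
    using assms run_length[OF assms(1)] unfolding d_def by auto
  have "occ x c n = occ x c (run_start L j) + (if run_symbol j = c then d else 0)"
    using occ_run_prefix[OF assms(1) d(3)] d(4) by simp
  moreover have "occ run_symbol c j =
                 occ run_symbol c (j - 1) + (if run_symbol j = c then 1 else 0)"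
    using occ_Suc[of run_symbol c "j - 1"] assms(1) by simp
  ultimately show ?thesis
    using occ_at_run_start[OF assms(1), of c] d(1,2) by auto
qed

end

lemma counts_within_factor_4:
  fixes j ones twos :: nat
  assumes "j \<ge> 2"
    and "(j + 1) div 2 \<le> ones" "ones \<le> 2 * ((j + 1) div 2)"
    and "j div 2 \<le> twos" "twos \<le> 2 * (j div 2)"
  shows "1 / 4 \<le> real ones / real twos \<and> real ones / real twos \<le> 4"
proof -
  define k where "k = j div 2"
  have "1 \<le> k" "k \<le> (j + 1) div 2" "(j + 1) div 2 \<le> k + 1"
    using assms(1) unfolding k_def by linarith+
  then have "twos \<ge> 1" "ones \<le> 4 * twos" "twos \<le> 4 * ones"
    using assms(2-5) unfolding k_def[symmetric] by linarith+
  then show ?thesis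
    by (simp add: divide_simps)
qed

theorem mainTheorem1:
  fixes K :: "nat \<Rightarrow> nat" and n :: nat
  assumes "is_kolakoski K" and "n \<ge> 2"
  shows "1 / 4 \<le> real (ones_count K n) / real (twos_count K n)
         \<and> real (ones_count K n) / real (twos_count K n) \<le> 4"
proof -
  have expansion: "run_expansion K K"
    using kolakoski_run_expansion[OF assms(1)] .
  obtain j where j: "j \<ge> 1" "run_start K j < n" "n \<le> run_start K j + K j"
    using run_containing[of K n] run_length[OF expansion] assms(2) by force
  have "K 1 = 1"
    using assms(1) unfolding is_kolakoski_def by simp
  then have "j \<ge> 2"
    using j assms(2) by (cases "j = 1") auto
  then show ?thesis
    unfolding ones_count_occ twos_count_occ
    using occ_in_run[OF expansion j, of 1] occ_in_run[OF expansion j, of 2]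
      occ_run_symbol[of j]
    by (intro counts_within_factor_4) auto
qed

end
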